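(* For all $\alpha\ge1/2$ and $\rho>1/2$, $$\sup_{k\in\mathbb Z\setminus\{0\}}|k|^{2+2\alpha}\sum_{*}|k_1k_2k_3|^{-2\alpha}\frac{1}{|k-k_1|^{2\rho}|k-k_2|^{2\rho}|k-k_3|^{2\rho}}<+\infty,$$ where $\sum_*$ denotes the sum over $(k_1,k_2,k_3)\in\mathbb Z^3$ with $k_1+k_2+k_3=k$, $k_1k_2k_3\ne0$ and $k_2\ne k$, $k_3\ne k$. *)

theory Defs
  imports "HOL-Analysis.Analysis"
begin

definition star_set :: "int \<Rightarrow> (int \<times> int \<times> int) set" where
  "star_set k = {(k1, k2, k3). k1 + k2 + k3 = k \<and> k1 * k2 * k3 \<noteq> 0 \<and> k2 \<noteq> k \<and> k3 \<noteq> k}"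

text \<open>Summand; note real division by zero gives 0 in Isabelle.\<close>
definition star_term :: "real \<Rightarrow> real \<Rightarrow> int \<Rightarrow> int \<times> int \<times> int \<Rightarrow> real" where
  "star_term \<alpha> \<rho> k x = (case x of (k1, k2, k3) \<Rightarrow>
     \<bar>real_of_int (k1 * k2 * k3)\<bar> powr (-2 * \<alpha>) /
     (\<bar>real_of_int (k - k1)\<bar> powr (2 * \<rho>) *
      \<bar>real_of_int (k - k2)\<bar> powr (2 * \<rho>) *
      \<bar>real_of_int (k - k3)\<bar> powr (2 * \<rho>)))"

end

theory Submission
  imports Defs
begin

text \<open>
  Write K = |k|, x_i = |k_i| and y_i = |k - k_i|. The triangle inequality gives
  K <= x_1 + x_2 + x_3, K <= x_i + y_i and 2K <= y_1 + y_2 + y_3. If two of the x_i are at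
  most K/6, the third is at least 2K/3 and the two matching y_i are at least K/2; otherwise
  x_1 x_2 x_3 >= (K/6)^2 and some y_i is at least 2K/3. Either way K^(2+2 alpha) times the
  summand is at most a constant independent of k times one of the six products (u v)^(-2 rho),
  where u, v are two of the x_i or two of the y_i. As a function of (k_1, k_2, k_3), each of
  these products is the summable weight |m n|^(-2 rho) on Z^2 pulled back along a map that is
  injective on the index set, so the whole sum is at most six times the total weight.
\<close>

lemma two_small_factors_exponent_bound:
  fixes a r K x1 x2 :: real
  assumes "1 \<le> a" "1 < r" "1 \<le> x1" "x1 \<le> K" "1 \<le> x2" "x2 \<le> K"
  shows "K powr (2 + a) * ((x1 * x2 * (2 * K / 3)) powr (- a) / (K / 2) powr (2 * r))
    \<le> (3 / 2) powr a * 4 powr r * (x1 powr (- r) * x2 powr (- r))"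
proof -
  have pos: "0 < K" "0 < x1" "0 < x2" using assms by auto
  have ln_bound: "(r - a) * ln x \<le> (r - 1) * ln K" if "1 \<le> x" "x \<le> K" for x
  proof -
    have "(r - a) * ln x \<le> (r - 1) * ln x" using assms that by (intro mult_right_mono) auto
    also have "\<dots> \<le> (r - 1) * ln K" using assms that by (intro mult_left_mono) auto
    finally show ?thesis .
  qed
  have "ln (4::real) = 2 * ln 2" using ln_realpow[of 2 2] by simp
  \<comment> \<open>the claim after taking logarithms\<close>
  then have "(2 + a) * ln K - a * (ln x1 + ln x2 + (ln 2 + ln K - ln 3)) - 2 * r * (ln K - ln 2)
      \<le> a * (ln 3 - ln 2) + r * ln 4 - r * ln x1 - r * ln x2"
    using ln_bound[of x1] ln_bound[of x2] assms by (simp add: algebra_simps)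
  then show ?thesis using pos
    by (simp add: powr_def ln_mult ln_div exp_add[symmetric] exp_diff[symmetric] algebra_simps)
qed

lemma two_small_factors_bound:
  fixes a r K x1 x2 x3 y1 y2 y3 :: real
  assumes "1 \<le> a" "1 < r" "1 \<le> x1" "x1 \<le> K" "1 \<le> x2" "x2 \<le> K" "2 * K / 3 \<le> x3"
    and "K / 2 \<le> y1" "K / 2 \<le> y2" "1 \<le> y3"
  shows "K powr (2 + a) * ((x1 * x2 * x3) powr (- a) / (y1 * y2 * y3) powr r)
    \<le> (3 / 2) powr a * 4 powr r * (x1 powr (- r) * x2 powr (- r))"
proof -
  have K: "0 < K" using assms by linarith
  have "(x1 * x2 * x3) powr (- a) \<le> (x1 * x2 * (2 * K / 3)) powr (- a)"
    using assms K by (intro powr_mono2' mult_left_mono) auto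
  moreover have "(K / 2) powr (2 * r) \<le> (y1 * y2 * y3) powr r"
  proof -
    have "(K / 2) powr (2 * r) = (K / 2) powr r * (K / 2) powr r * 1"
      by (simp add: powr_add[symmetric])
    also have "\<dots> \<le> y1 powr r * y2 powr r * y3 powr r"
      using assms K by (intro mult_mono powr_mono2 ge_one_powr_ge_zero) auto
    also have "\<dots> = (y1 * y2 * y3) powr r"
      using assms K by (simp add: powr_mult)
    finally show ?thesis .
  qed
  ultimately have "(x1 * x2 * x3) powr (- a) / (y1 * y2 * y3) powr r
      \<le> (x1 * x2 * (2 * K / 3)) powr (- a) / (K / 2) powr (2 * r)"
    using K by (intro frac_le) auto
  then have "K powr (2 + a) * ((x1 * x2 * x3) powr (- a) / (y1 * y2 * y3) powr r)
      \<le> K powr (2 + a) * ((x1 * x2 * (2 * K / 3)) powr (- a) / (K / 2) powr (2 * r))"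
    by (intro mult_left_mono) auto
  also have "\<dots> \<le> (3 / 2) powr a * 4 powr r * (x1 powr (- r) * x2 powr (- r))"
    using two_small_factors_exponent_bound[OF assms(1-6)] .
  finally show ?thesis .
qed

lemma two_large_factors_exponent_bound:
  fixes a K :: real
  assumes "1 \<le> a" "1 \<le> K"
  shows "K powr (2 + a) * (K / 6) powr (- 2 * a) \<le> 36 powr a * K"
proof -
  have K: "0 < K" using assms by linarith
  have "(K / 6) powr (- 2 * a) = K powr (- 2 * a) / 6 powr (- 2 * a)"
    by (rule powr_divide)
  also have "\<dots> = K powr (- 2 * a) * 36 powr a"
    by (simp add: powr_minus_divide powr_powr[symmetric])
  finally have "K powr (2 + a) * (K / 6) powr (- 2 * a) = 36 powr a * (K powr (2 + a) * K powr (- 2 * a))"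
    by simp
  also have "K powr (2 + a) * K powr (- 2 * a) = K powr (2 - a)"
    using powr_add[of K "2 + a" "- 2 * a"] by simp
  also have "36 powr a * K powr (2 - a) \<le> 36 powr a * K powr 1"
    using assms by (intro mult_left_mono powr_mono) auto
  finally show ?thesis using K by simp
qed

lemma two_large_factors_bound:
  fixes a r K x1 x2 x3 y1 y2 y3 :: real
  assumes "1 \<le> a" "1 \<le> r" "1 \<le> K" "(K / 6) * (K / 6) \<le> x1 * x2 * x3"
    and "2 * K / 3 \<le> y1" "1 \<le> y1" "0 < y2" "0 < y3"
  shows "K powr (2 + a) * ((x1 * x2 * x3) powr (- a) / (y1 * y2 * y3) powr r)
    \<le> 2 * 36 powr a * (y2 powr (- r) * y3 powr (- r))"
proof -
  have K: "0 < K" using assms by linarith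
  have "(x1 * x2 * x3) powr (- a) \<le> ((K / 6) * (K / 6)) powr (- a)"
    using assms K by (intro powr_mono2') auto
  also have "\<dots> = (K / 6) powr (- 2 * a)"
    by (simp only: powr_mult powr_add[symmetric]) simp
  finally have num: "(x1 * x2 * x3) powr (- a) \<le> (K / 6) powr (- 2 * a)" .
  have "y1 powr 1 \<le> y1 powr r" using assms by (intro powr_mono) auto
  then have den: "2 * K / 3 \<le> y1 powr r" using assms by simp
  have "K powr (2 + a) * ((x1 * x2 * x3) powr (- a) / y1 powr r)
      \<le> K powr (2 + a) * ((K / 6) powr (- 2 * a) / (2 * K / 3))"
    using num den K by (intro mult_left_mono frac_le) auto
  also have "\<dots> = 3 / 2 * (K powr (2 + a) * (K / 6) powr (- 2 * a)) / K"
    by simp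
  also have "\<dots> \<le> 3 / 2 * (36 powr a * K) / K"
    using two_large_factors_exponent_bound[OF assms(1,3)] K by (intro divide_right_mono mult_left_mono) auto
  also have "\<dots> \<le> 2 * 36 powr a"
    using K by simp
  finally have "K powr (2 + a) * ((x1 * x2 * x3) powr (- a) / y1 powr r) \<le> 2 * 36 powr a" .
  then have "K powr (2 + a) * ((x1 * x2 * x3) powr (- a) / y1 powr r) * (y2 powr (- r) * y3 powr (- r))
      \<le> 2 * 36 powr a * (y2 powr (- r) * y3 powr (- r))"
    by (intro mult_right_mono) auto
  moreover have "(y1 * y2 * y3) powr r = y1 powr r * y2 powr r * y3 powr r"
    using assms K by (simp add: powr_mult)
  ultimately show ?thesis using assms by (simp add: powr_minus divide_simps mult_ac)
qed

definition pair_sum :: "real \<Rightarrow> real \<Rightarrow> real \<Rightarrow> real \<Rightarrow> real" where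
  "pair_sum r u v w =
     u powr (- r) * v powr (- r) + u powr (- r) * w powr (- r) + v powr (- r) * w powr (- r)"

lemma pair_sum_nonneg: "0 \<le> pair_sum r u v w"
  by (simp add: pair_sum_def)

lemma pair_sum_ge:
  "u powr (- r) * v powr (- r) \<le> pair_sum r u v w"
  "u powr (- r) * w powr (- r) \<le> pair_sum r u v w"
  "v powr (- r) * w powr (- r) \<le> pair_sum r u v w"
proof -
  have "0 \<le> p powr (- r) * q powr (- r)" for p q :: real by simp
  from this[of u v] this[of u w] this[of v w] show
    "u powr (- r) * v powr (- r) \<le> pair_sum r u v w"
    "u powr (- r) * w powr (- r) \<le> pair_sum r u v w"
    "v powr (- r) * w powr (- r) \<le> pair_sum r u v w"
    unfolding pair_sum_def by linarith+
qed

lemma two_small_case_bound: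
  fixes a r K x1 x2 x3 y1 y2 y3 :: real
  assumes "1 \<le> a" "1 < r" "1 \<le> x1" "1 \<le> x2" "1 \<le> x3" "1 \<le> y1" "1 \<le> y2" "1 \<le> y3"
    and "K \<le> x1 + x2 + x3" "K \<le> x1 + y1" "K \<le> x2 + y2" "K \<le> x3 + y3"
    and "x1 \<le> K / 6 \<and> x2 \<le> K / 6 \<or> x1 \<le> K / 6 \<and> x3 \<le> K / 6 \<or> x2 \<le> K / 6 \<and> x3 \<le> K / 6"
  shows "K powr (2 + a) * ((x1 * x2 * x3) powr (- a) / (y1 * y2 * y3) powr r)
    \<le> (3 / 2) powr a * 4 powr r * pair_sum r x1 x2 x3"
proof -
  have pair: "K powr (2 + a) * ((u * v * w) powr (- a) / (yu * yv * yw) powr r)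
      \<le> (3 / 2) powr a * 4 powr r * pair_sum r u v w"
    if "1 \<le> u" "u \<le> K / 6" "1 \<le> v" "v \<le> K / 6" "K \<le> u + v + w"
      "K \<le> u + yu" "K \<le> v + yv" "1 \<le> yw" for u v w yu yv yw
  proof -
    have "K powr (2 + a) * ((u * v * w) powr (- a) / (yu * yv * yw) powr r)
        \<le> (3 / 2) powr a * 4 powr r * (u powr (- r) * v powr (- r))"
      using assms(1,2) that by (intro two_small_factors_bound) auto
    also have "\<dots> \<le> (3 / 2) powr a * 4 powr r * pair_sum r u v w"
      using pair_sum_ge(1) by (intro mult_left_mono) auto
    finally show ?thesis .
  qed
  from assms(13) consider "x1 \<le> K / 6" "x2 \<le> K / 6" | "x1 \<le> K / 6" "x3 \<le> K / 6"
    | "x2 \<le> K / 6" "x3 \<le> K / 6"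
    by blast
  then show ?thesis
  proof cases
    case 1
    show ?thesis by (rule pair) (use 1 assms in linarith)+
  next
    case 2
    have "K powr (2 + a) * ((x1 * x3 * x2) powr (- a) / (y1 * y3 * y2) powr r)
        \<le> (3 / 2) powr a * 4 powr r * pair_sum r x1 x3 x2"
      by (rule pair) (use 2 assms in linarith)+
    then show ?thesis by (simp add: ac_simps pair_sum_def)
  next
    case 3
    have "K powr (2 + a) * ((x2 * x3 * x1) powr (- a) / (y2 * y3 * y1) powr r)
        \<le> (3 / 2) powr a * 4 powr r * pair_sum r x2 x3 x1"
      by (rule pair) (use 3 assms in linarith)+
    then show ?thesis by (simp add: ac_simps pair_sum_def)
  qed
qed

lemma two_large_case_bound:
  fixes a r K x1 x2 x3 y1 y2 y3 :: real
  assumes "1 \<le> a" "1 < r" "1 \<le> K" "(K / 6) * (K / 6) \<le> x1 * x2 * x3"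
    and "1 \<le> y1" "1 \<le> y2" "1 \<le> y3" "2 * K \<le> y1 + y2 + y3"
  shows "K powr (2 + a) * ((x1 * x2 * x3) powr (- a) / (y1 * y2 * y3) powr r)
    \<le> 2 * 36 powr a * pair_sum r y1 y2 y3"
proof -
  have large: "K powr (2 + a) * ((x1 * x2 * x3) powr (- a) / (u * v * w) powr r)
      \<le> 2 * 36 powr a * pair_sum r u v w"
    if "2 * K / 3 \<le> u" "1 \<le> u" "1 \<le> v" "1 \<le> w" for u v w
  proof -
    have "K powr (2 + a) * ((x1 * x2 * x3) powr (- a) / (u * v * w) powr r)
        \<le> 2 * 36 powr a * (v powr (- r) * w powr (- r))"
      using assms(1-4) that by (intro two_large_factors_bound) auto
    also have "\<dots> \<le> 2 * 36 powr a * pair_sum r u v w"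
      using pair_sum_ge(3) by (intro mult_left_mono) auto
    finally show ?thesis .
  qed
  consider "2 * K / 3 \<le> y1" | "2 * K / 3 \<le> y2" | "2 * K / 3 \<le> y3"
    using assms(8) by linarith
  then show ?thesis
  proof cases
    case 1
    show ?thesis by (rule large) (use 1 assms in linarith)+
  next
    case 2
    have "K powr (2 + a) * ((x1 * x2 * x3) powr (- a) / (y2 * y1 * y3) powr r)
        \<le> 2 * 36 powr a * pair_sum r y2 y1 y3"
      by (rule large) (use 2 assms in linarith)+
    then show ?thesis by (simp add: ac_simps pair_sum_def)
  next
    case 3
    have "K powr (2 + a) * ((x1 * x2 * x3) powr (- a) / (y3 * y1 * y2) powr r)
        \<le> 2 * 36 powr a * pair_sum r y3 y1 y2"
      by (rule large) (use 3 assms in linarith)+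
    then show ?thesis by (simp add: ac_simps pair_sum_def)
  qed
qed

lemma square_le_prod_of_two_factors_ge:
  fixes t x1 x2 x3 :: real
  assumes "0 \<le> t" "1 \<le> x1" "1 \<le> x2" "1 \<le> x3"
    and "t \<le> x1 \<and> t \<le> x2 \<or> t \<le> x1 \<and> t \<le> x3 \<or> t \<le> x2 \<and> t \<le> x3"
  shows "t * t \<le> x1 * x2 * x3"
proof -
  have square_le: "t * t \<le> u * v * w" if "t \<le> u" "t \<le> v" "1 \<le> w" for u v w
  proof -
    have "t * t \<le> u * v" using assms(1) that by (intro mult_mono) auto
    also have "\<dots> \<le> u * v * w" using assms(1) that mult_left_mono[of 1 w "u * v"] by simp
    finally show ?thesis .
  qed
  from assms(5) consider "t \<le> x1" "t \<le> x2" | "t \<le> x1" "t \<le> x3" | "t \<le> x2" "t \<le> x3"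
    by blast
  then show ?thesis
  proof cases
    case 1
    then show ?thesis using assms by (intro square_le) auto
  next
    case 2
    then have "t * t \<le> x1 * x3 * x2" using assms by (intro square_le) auto
    then show ?thesis by (simp add: mult_ac)
  next
    case 3
    then have "t * t \<le> x2 * x3 * x1" using assms by (intro square_le) auto
    then show ?thesis by (simp add: mult_ac)
  qed
qed

definition summand_constant :: "real \<Rightarrow> real \<Rightarrow> real" where
  "summand_constant a r = (3 / 2) powr a * 4 powr r + 2 * 36 powr a"

lemma summand_constant_nonneg: "0 \<le> summand_constant a r"
  by (simp add: summand_constant_def)

lemma weighted_summand_le_pair_sums:
  fixes a r K x1 x2 x3 y1 y2 y3 :: real
  assumes "1 \<le> a" "1 < r" "1 \<le> K"
    and "1 \<le> x1" "1 \<le> x2" "1 \<le> x3" "1 \<le> y1" "1 \<le> y2" "1 \<le> y3"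
    and "K \<le> x1 + x2 + x3" "K \<le> x1 + y1" "K \<le> x2 + y2" "K \<le> x3 + y3"
      "2 * K \<le> y1 + y2 + y3"
  shows "K powr (2 + a) * ((x1 * x2 * x3) powr (- a) / (y1 * y2 * y3) powr r)
    \<le> summand_constant a r * (pair_sum r x1 x2 x3 + pair_sum r y1 y2 y3)"
proof -
  let ?L = "K powr (2 + a) * ((x1 * x2 * x3) powr (- a) / (y1 * y2 * y3) powr r)"
  let ?c1 = "(3 / 2) powr a * 4 powr r" and ?c2 = "2 * 36 powr a"
  let ?two_small = "x1 \<le> K / 6 \<and> x2 \<le> K / 6 \<or> x1 \<le> K / 6 \<and> x3 \<le> K / 6
      \<or> x2 \<le> K / 6 \<and> x3 \<le> K / 6"
  have c: "0 \<le> ?c1" "0 \<le> ?c2" by simp_all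
  note S = pair_sum_nonneg[of r x1 x2 x3] pair_sum_nonneg[of r y1 y2 y3]
  have large_product: "(K / 6) * (K / 6) \<le> x1 * x2 * x3" if "\<not> ?two_small"
    using that assms by (intro square_le_prod_of_two_factors_ge) auto
  show ?thesis
  proof (cases ?two_small)
    case True
    then have "?L \<le> ?c1 * pair_sum r x1 x2 x3"
      using assms by (intro two_small_case_bound) auto
    also have "\<dots> \<le> summand_constant a r * (pair_sum r x1 x2 x3 + pair_sum r y1 y2 y3)"
      unfolding summand_constant_def using c S by (intro mult_mono) auto
    finally show ?thesis .
  next
    case False
    then have "?L \<le> ?c2 * pair_sum r y1 y2 y3"
      using assms large_product by (intro two_large_case_bound) auto
    also have "\<dots> \<le> summand_constant a r * (pair_sum r x1 x2 x3 + pair_sum r y1 y2 y3)"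
      unfolding summand_constant_def using c S by (intro mult_mono) auto
    finally show ?thesis .
  qed
qed

definition pair_weight :: "real \<Rightarrow> int \<times> int \<Rightarrow> real" where
  "pair_weight r z = \<bar>real_of_int (fst z)\<bar> powr (- r) * \<bar>real_of_int (snd z)\<bar> powr (- r)"

lemma pair_weight_nonneg: "0 \<le> pair_weight r z"
  by (simp add: pair_weight_def)

lemma summable_on_abs_int_powr:
  assumes "1 < r"
  shows "(\<lambda>n::int. \<bar>real_of_int n\<bar> powr (- r)) summable_on UNIV"
proof -
  let ?f = "\<lambda>n::int. \<bar>real_of_int n\<bar> powr (- r)"
  have "summable (\<lambda>n::nat. real n powr (- r))"
    using assms summable_real_powr_iff[of "- r"] by simp
  then have nat: "(\<lambda>n::nat. real n powr (- r)) summable_on UNIV"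
    by (intro norm_summable_imp_summable_on) simp
  have "?f summable_on range int"
    using nat summable_on_reindex[of int UNIV ?f] by (simp add: o_def)
  moreover have "?f summable_on range (\<lambda>n::nat. - int n)"
    using nat summable_on_reindex[of "\<lambda>n::nat. - int n" UNIV ?f] by (simp add: o_def inj_def)
  moreover have "UNIV = range int \<union> range (\<lambda>n::nat. - int n)"
    by (auto intro: image_eqI[where x = "nat _"] simp: image_iff) (presburger)
  ultimately show ?thesis by (metis summable_on_union)
qed

lemma summable_on_pair_weight:
  assumes "1 < r"
  shows "pair_weight r summable_on UNIV"
proof -
  let ?f = "\<lambda>n::int. \<bar>real_of_int n\<bar> powr (- r)"
  have "pair_weight r summable_on Sigma UNIV (\<lambda>_. UNIV)"
  proof (rule summable_on_SigmaI[where g = "\<lambda>m. ?f m * (\<Sum>\<^sub>\<infinity>n. ?f n)"])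
    show "((\<lambda>n. pair_weight r (m, n)) has_sum ?f m * (\<Sum>\<^sub>\<infinity>n. ?f n)) UNIV" for m
      unfolding pair_weight_def fst_conv snd_conv
      using summable_on_abs_int_powr[OF assms] by (intro has_sum_cmult_right) auto
    show "(\<lambda>m. ?f m * (\<Sum>\<^sub>\<infinity>n. ?f n)) summable_on UNIV"
      using summable_on_abs_int_powr[OF assms] by (rule summable_on_cmult_left)
  qed (simp add: pair_weight_def)
  then show ?thesis by simp
qed

lemma summable_on_comp_inj_on:
  fixes f :: "'b \<Rightarrow> 'c::banach"
  assumes "f summable_on UNIV" "inj_on \<phi> A"
  shows "(f \<circ> \<phi>) summable_on A"
  using summable_on_subset_banach[OF assms(1)] summable_on_reindex[OF assms(2)] by blast

lemma infsum_comp_inj_on_le: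
  fixes f :: "'b \<Rightarrow> real"
  assumes "f summable_on UNIV" "\<And>z. 0 \<le> f z" "inj_on \<phi> A"
  shows "(\<Sum>\<^sub>\<infinity>x\<in>A. f (\<phi> x)) \<le> (\<Sum>\<^sub>\<infinity>z. f z)"
proof -
  have "(\<Sum>\<^sub>\<infinity>x\<in>A. f (\<phi> x)) = (\<Sum>\<^sub>\<infinity>z\<in>\<phi> ` A. f z)"
    using infsum_reindex[OF assms(3), of f] by (simp add: o_def)
  also have "\<dots> \<le> (\<Sum>\<^sub>\<infinity>z. f z)"
    using assms summable_on_subset_banach[OF assms(1)] by (intro infsum_mono_neutral) auto
  finally show ?thesis .
qed

lemma summable_on_sum_list_comp_inj_on:
  fixes f :: "'b \<Rightarrow> real"
  assumes "f summable_on UNIV" "\<And>z. 0 \<le> f z" "\<And>\<phi>. \<phi> \<in> set \<Phi> \<Longrightarrow> inj_on \<phi> A"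
  shows "(\<lambda>x. \<Sum>\<phi>\<leftarrow>\<Phi>. f (\<phi> x)) summable_on A
    \<and> (\<Sum>\<^sub>\<infinity>x\<in>A. \<Sum>\<phi>\<leftarrow>\<Phi>. f (\<phi> x)) \<le> length \<Phi> * (\<Sum>\<^sub>\<infinity>z. f z)"
  using assms(3)
proof (induction \<Phi>)
  case Nil
  then show ?case by simp
next
  case (Cons \<phi> \<Phi>)
  then have IH: "(\<lambda>x. \<Sum>\<psi>\<leftarrow>\<Phi>. f (\<psi> x)) summable_on A"
      "(\<Sum>\<^sub>\<infinity>x\<in>A. \<Sum>\<psi>\<leftarrow>\<Phi>. f (\<psi> x)) \<le> length \<Phi> * (\<Sum>\<^sub>\<infinity>z. f z)"
    by auto
  have "inj_on \<phi> A" using Cons.prems by simp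
  then have \<phi>: "(\<lambda>x. f (\<phi> x)) summable_on A" "(\<Sum>\<^sub>\<infinity>x\<in>A. f (\<phi> x)) \<le> (\<Sum>\<^sub>\<infinity>z. f z)"
    using summable_on_comp_inj_on[OF assms(1)] infsum_comp_inj_on_le[OF assms(1,2)]
    by (simp_all add: o_def)
  show ?case
    using summable_on_add[OF \<phi>(1) IH(1)] infsum_add[OF \<phi>(1) IH(1)] \<phi>(2) IH(2)
    by (simp add: algebra_simps)
qed

lemma comparison_with_sum_list_comp_inj_on:
  fixes f :: "'b \<Rightarrow> real" and g :: "'a \<Rightarrow> real"
  assumes "f summable_on UNIV" "\<And>z. 0 \<le> f z" "\<And>\<phi>. \<phi> \<in> set \<Phi> \<Longrightarrow> inj_on \<phi> A"
    and "0 \<le> c" "\<And>x. x \<in> A \<Longrightarrow> 0 \<le> g x" "\<And>x. x \<in> A \<Longrightarrow> g x \<le> c * (\<Sum>\<phi>\<leftarrow>\<Phi>. f (\<phi> x))"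
  shows "g summable_on A" "(\<Sum>\<^sub>\<infinity>x\<in>A. g x) \<le> c * (length \<Phi> * (\<Sum>\<^sub>\<infinity>z. f z))"
proof -
  note pullbacks = summable_on_sum_list_comp_inj_on[OF assms(1-3)]
  have majorant: "(\<lambda>x. c * (\<Sum>\<phi>\<leftarrow>\<Phi>. f (\<phi> x))) summable_on A"
    using pullbacks by (intro summable_on_cmult_right) auto
  show g: "g summable_on A"
    using summable_on_comparison_test[OF majorant] assms(5,6) by blast
  have "(\<Sum>\<^sub>\<infinity>x\<in>A. g x) \<le> (\<Sum>\<^sub>\<infinity>x\<in>A. c * (\<Sum>\<phi>\<leftarrow>\<Phi>. f (\<phi> x)))"
    using g majorant assms(6) by (rule infsum_mono)
  also have "\<dots> = c * (\<Sum>\<^sub>\<infinity>x\<in>A. \<Sum>\<phi>\<leftarrow>\<Phi>. f (\<phi> x))"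
    by (rule infsum_cmult_right')
  also have "\<dots> \<le> c * (length \<Phi> * (\<Sum>\<^sub>\<infinity>z. f z))"
    using pullbacks assms(4) by (intro mult_left_mono) auto
  finally show "(\<Sum>\<^sub>\<infinity>x\<in>A. g x) \<le> c * (length \<Phi> * (\<Sum>\<^sub>\<infinity>z. f z))" .
qed

definition star_pairs :: "int \<Rightarrow> (int \<times> int \<times> int \<Rightarrow> int \<times> int) list" where
  "star_pairs k =
     [\<lambda>(k1, k2, k3). (k1, k2), \<lambda>(k1, k2, k3). (k1, k3), \<lambda>(k1, k2, k3). (k2, k3),
      \<lambda>(k1, k2, k3). (k - k1, k - k2), \<lambda>(k1, k2, k3). (k - k1, k - k3),
      \<lambda>(k1, k2, k3). (k - k2, k - k3)]"

lemma inj_on_star_pairs: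
  assumes "\<phi> \<in> set (star_pairs k)"
  shows "inj_on \<phi> (star_set k)"
proof (rule inj_on_subset)
  show "inj_on \<phi> {(k1, k2, k3). k1 + k2 + k3 = k}"
    using assms by (auto simp: star_pairs_def inj_on_def)
  show "star_set k \<subseteq> {(k1, k2, k3). k1 + k2 + k3 = k}"
    by (auto simp: star_set_def)
qed

lemma star_term_le_pair_weights:
  assumes "1 / 2 \<le> \<alpha>" "1 / 2 < \<rho>" "k \<noteq> 0" "x \<in> star_set k"
  shows "\<bar>real_of_int k\<bar> powr (2 + 2 * \<alpha>) * star_term \<alpha> \<rho> k x
    \<le> summand_constant (2 * \<alpha>) (2 * \<rho>) * (\<Sum>\<phi>\<leftarrow>star_pairs k. pair_weight (2 * \<rho>) (\<phi> x))"
proof -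
  obtain k1 k2 k3 where x: "x = (k1, k2, k3)" by (cases x)
  have k: "k = k1 + k2 + k3" "k1 \<noteq> 0" "k2 \<noteq> 0" "k3 \<noteq> 0" "k2 \<noteq> k" "k3 \<noteq> k"
    using assms(4) by (auto simp: x star_set_def)
  let ?r = "\<lambda>n. \<bar>real_of_int n\<bar>"
  have pairs: "(\<Sum>\<phi>\<leftarrow>star_pairs k. pair_weight (2 * \<rho>) (\<phi> x))
      = pair_sum (2 * \<rho>) (?r k1) (?r k2) (?r k3) + pair_sum (2 * \<rho>) (?r (k - k1)) (?r (k - k2)) (?r (k - k3))"
    by (simp add: x star_pairs_def pair_weight_def pair_sum_def)
  have nonneg: "0 \<le> (\<Sum>\<phi>\<leftarrow>star_pairs k. pair_weight (2 * \<rho>) (\<phi> x))"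
    by (simp add: pairs pair_sum_nonneg)
  show ?thesis
  proof (cases "k1 = k")
    case True
    \<comment> \<open>the denominator is 0 powr (2 * \<rho>) = 0, and x / 0 = 0\<close>
    then show ?thesis using nonneg summand_constant_nonneg by (simp add: x star_term_def)
  next
    case False
    have one_le: "1 \<le> ?r n" if "n \<noteq> 0" for n
      using that by (simp add: of_int_abs[symmetric] del: of_int_abs)
    have "k - k1 \<noteq> 0" "k - k2 \<noteq> 0" "k - k3 \<noteq> 0" using False k by auto
    note ge_one = one_le[OF assms(3)] one_le[OF k(2)] one_le[OF k(3)] one_le[OF k(4)]
      one_le[OF this(1)] one_le[OF this(2)] one_le[OF this(3)]
    have exponents: "1 \<le> 2 * \<alpha>" "1 < 2 * \<rho>" using assms(1,2) by simp_all
    have summand: "star_term \<alpha> \<rho> k x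
        = (?r k1 * ?r k2 * ?r k3) powr (- (2 * \<alpha>)) / (?r (k - k1) * ?r (k - k2) * ?r (k - k3)) powr (2 * \<rho>)"
      by (simp add: x star_term_def abs_mult powr_mult)
    have triangle: "?r k \<le> ?r k1 + ?r k2 + ?r k3"
      "?r k \<le> ?r k1 + ?r (k - k1)" "?r k \<le> ?r k2 + ?r (k - k2)" "?r k \<le> ?r k3 + ?r (k - k3)"
      "2 * ?r k \<le> ?r (k - k1) + ?r (k - k2) + ?r (k - k3)"
      using k by linarith+
    show ?thesis
      unfolding summand pairs by (rule weighted_summand_le_pair_sums[OF exponents ge_one triangle])
  qed
qed

lemma weighted_star_sum_bound:
  assumes "1 / 2 \<le> \<alpha>" "1 / 2 < \<rho>" "k \<noteq> 0"
  shows "star_term \<alpha> \<rho> k summable_on star_set k \<and>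
    \<bar>real_of_int k\<bar> powr (2 + 2 * \<alpha>) * (\<Sum>\<^sub>\<infinity>x\<in>star_set k. star_term \<alpha> \<rho> k x)
      \<le> summand_constant (2 * \<alpha>) (2 * \<rho>) * (6 * (\<Sum>\<^sub>\<infinity>z. pair_weight (2 * \<rho>) z))"
proof -
  define C where "C = summand_constant (2 * \<alpha>) (2 * \<rho>)"
  define W where "W = (\<Sum>\<^sub>\<infinity>z. pair_weight (2 * \<rho>) z)"
  define K where "K = \<bar>real_of_int k\<bar> powr (2 + 2 * \<alpha>)"
  have K: "0 < K" using assms(3) by (simp add: K_def)
  have bound: "star_term \<alpha> \<rho> k x \<le> C / K * (\<Sum>\<phi>\<leftarrow>star_pairs k. pair_weight (2 * \<rho>) (\<phi> x))"
    if "x \<in> star_set k" for x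
    using star_term_le_pair_weights[OF assms that] K by (simp add: C_def K_def field_simps)
  have nonneg: "0 \<le> star_term \<alpha> \<rho> k x" for x
    by (cases x) (simp add: star_term_def)
  have "0 \<le> C / K" using K summand_constant_nonneg by (simp add: C_def)
  moreover have "1 < 2 * \<rho>" using assms(2) by simp
  ultimately have summable: "star_term \<alpha> \<rho> k summable_on star_set k"
    and "(\<Sum>\<^sub>\<infinity>x\<in>star_set k. star_term \<alpha> \<rho> k x) \<le> C / K * (length (star_pairs k) * W)"
    unfolding W_def
    using comparison_with_sum_list_comp_inj_on[where \<Phi> = "star_pairs k" and A = "star_set k",
        OF summable_on_pair_weight pair_weight_nonneg inj_on_star_pairs _ nonneg bound]
    by blast+
  then have "K * (\<Sum>\<^sub>\<infinity>x\<in>star_set k. star_term \<alpha> \<rho> k x) \<le> K * (C / K * (6 * W))"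
    using K by (intro mult_left_mono) (simp_all add: star_pairs_def)
  also have "\<dots> = C * (6 * W)" using K by simp
  finally show ?thesis using summable by (simp add: C_def W_def K_def)
qed

theorem mainTheorem11:
  fixes \<alpha> \<rho> :: real
  assumes "\<alpha> \<ge> 1/2" and "\<rho> > 1/2"
  shows "\<exists>C::real. \<forall>k::int. k \<noteq> 0 \<longrightarrow>
     star_term \<alpha> \<rho> k summable_on star_set k \<and>
     \<bar>real_of_int k\<bar> powr (2 + 2 * \<alpha>) * (\<Sum>\<^sub>\<infinity>x\<in>star_set k. star_term \<alpha> \<rho> k x) \<le> C"
  using weighted_star_sum_bound[OF assms] by blast

end
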